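(* Let $\mathcal S$ be a finite nonempty set of positive half-integers (elements of $\tfrac12\mathbb Z_{>0}$), and let $(\rho_{s'})_{s'\in\mathcal S}$ be positive real numbers with $\sum_{s'\in\mathcal S}\rho_{s'}=1$. For $s\in\mathcal S$ define the vacuum energy density $$\mathcal E_0^{(s)}=-\sum_{s'\in\mathcal S}\rho_{s'}\int_{-\infty}^{\infty}\sigma^{(0)}(\lambda)\,\Psi^{(s')}_{2s}(\lambda)\,d\lambda ,\qquad \sigma^{(0)}(\lambda)=\frac{1}{2\cosh(\pi\lambda)} .$$ Then, for every $s\in\mathcal S$, $$\mathcal E_0^{(s)}=-\sum_{s'\in\mathcal S}\rho_{s'}\left(\psi\Big(\frac{s'+s+1}{2}\Big)-\psi\Big(\frac{|s'-s|+1}{2}\Big)\right),$$ where $\psi$ is the Euler digamma function.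
   Context: This is the energy per site of the antiferromagnetic vacuum of a periodic $L_0$-regular $gl(2)$ (XXX) spin chain whose site spins take the values in $\mathcal S$, the value $s'$ occurring with density $\rho_{s'}$ in the repeated motif, the energy being that of the Hamiltonian $H^{(s)}$ built from the transfer matrix with auxiliary space of spin $s$. In the thermodynamic limit under the string hypothesis the vacuum consists of filled seas of $2s'$-strings ($s'\in\mathcal S$) with root densities $\rho_{s'}\sigma^{(0)}(\lambda)$, and the energy per site is given by the integral in the claim. Here, for a positive integer $p$ and $m\in\tfrac12\mathbb Z_{>0}$, $$\Psi^{(m)}_{p}(\lambda)=\sum_{\alpha=-m+\frac12}^{m-\frac12} f_{\alpha+\frac p2}(\lambda),$$ the sum running over $\alpha\in\{-m+\tfrac12,-m+\tfrac32,\dots,m-\tfrac12\}$, where $f_x(\lambda)=\dfrac{2x}{\lambda^2+x^2}$ for real $x\neq0$ and $f_0\equiv0$ (this is the energy contribution of a $2m$-string with real center $\lambda$). *)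

theory Defs
  imports "HOL-Analysis.Analysis"
begin

definition string_f :: "real \<Rightarrow> real \<Rightarrow> real" where
  "string_f x lam = (if x = 0 then 0 else 2 * x / (lam\<^sup>2 + x\<^sup>2))"

text \<open>Psi^(m)_p(lambda) = sum of f_(alpha + p/2)(lambda) over
  alpha in {-m+1/2, -m+3/2, ..., m-1/2}, i.e. alpha = -m + 1/2 + k for k = 0..2m-1
  (m a positive half-integer, so 2m is a positive integer).\<close>
definition Psi :: "real \<Rightarrow> real \<Rightarrow> real \<Rightarrow> real" where
  "Psi m p lam = (\<Sum>k<nat \<lfloor>2 * m\<rfloor>. string_f (- m + 1/2 + real k + p / 2) lam)"

definition sigma0 :: "real \<Rightarrow> real" where
  "sigma0 lam = 1 / (2 * cosh (pi * lam))"

definition vacuum_energy :: "real set \<Rightarrow> (real \<Rightarrow> real) \<Rightarrow> real \<Rightarrow> real" where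
  "vacuum_energy S \<rho> s =
     - (\<Sum>s'\<in>S. \<rho> s' * (\<integral>lam. sigma0 lam * Psi s' (2 * s) lam \<partial>lborel))"

definition half_pos_int :: "real \<Rightarrow> bool" where
  "half_pos_int x \<longleftrightarrow> (\<exists>n::nat. n > 0 \<and> x = real n / 2)"

end

theory Submission
  imports Defs "HOL-Real_Asymp.Real_Asymp"
begin

text \<open>
  Evaluating \<open>\<pi> cot \<pi>z = \<psi>(1 - z) - \<psi>(z)\<close> at the conjugate points \<open>z = 1/4 \<plusminus> i\<lambda>/2\<close> expands
  \<open>\<pi>/(2 cosh \<pi>\<lambda>)\<close> into the alternating series \<open>\<Sum>\<^sub>k (L\<^bsub>2k+1/2\<^esub>(\<lambda>) - L\<^bsub>2k+3/2\<^esub>(\<lambda>))\<close> of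
  Lorentzians \<open>L\<^sub>a(\<lambda>) = a/(\<lambda>\<^sup>2 + a\<^sup>2)\<close>. Since \<open>\<integral> L\<^sub>a L\<^sub>b = \<pi>/(a + b)\<close>, integrating \<open>\<sigma>\<^sup>(\<^sup>0\<^sup>)\<close>
  against \<open>f\<^sub>x = 2L\<^sub>x\<close> term by term gives a series that sums to
  \<open>\<psi>((x + 3/2)/2) - \<psi>((x + 1/2)/2)\<close> for \<open>x > 0\<close>; \<open>f\<^sub>x\<close> is odd in \<open>x\<close>. For half-integer \<open>x\<close> both
  cases read \<open>D(x + 1) - D(x)\<close> with \<open>D(y) = \<psi>((\<bar>y - 1/2\<bar> + 1)/2)\<close>, so the sum over the string in
  \<open>\<Psi>\<close> telescopes.
\<close>

subsection \<open>Digamma and cotangent\<close>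

lemma Digamma_diff_sums:
  fixes z w :: "'a :: {real_normed_field,banach}"
  assumes "z \<noteq> 0" and "w \<noteq> 0"
  shows "(\<lambda>k. inverse (z + of_nat k) - inverse (w + of_nat k)) sums (Digamma w - Digamma z)"
proof -
  have "(\<lambda>k. inverse (of_nat (Suc k)) - inverse (u + of_nat k)) sums (Digamma u + euler_mascheroni)"
    if "u \<noteq> 0" for u :: 'a
    using summable_Digamma[OF that] by (simp add: Digamma_def summable_sums)
  from sums_diff[OF this[OF assms(2)] this[OF assms(1)]] show ?thesis
    by simp
qed

lemma sin_pi_times_nonzero:
  fixes z :: complex
  assumes "z \<notin> \<int>"
  shows "sin (of_real pi * z) \<noteq> 0"
proof
  assume "sin (of_real pi * z) = 0"
  then obtain n :: int where "of_real pi * z = of_real (n * pi)"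
    by (auto simp: sin_eq_0)
  then have "z = of_int n"
    by (simp add: field_simps)
  with assms show False
    by simp
qed

lemma pi_cot_eq_Digamma_diff:
  fixes z :: complex
  assumes z: "z \<notin> \<int>"
  shows "of_real pi * cot (of_real pi * z) = Digamma (1 - z) - Digamma z"
proof -
  define g where "g t = Gamma t * Gamma (1 - t) * sin (of_real pi * t)" for t :: complex
  have z_nonpos: "z \<notin> \<int>\<^sub>\<le>\<^sub>0" "1 - z \<notin> \<int>\<^sub>\<le>\<^sub>0"
    using z Ints_diff[of 1 "1 - z"] nonpos_Ints_subset_Ints by auto
  have nonzero: "Gamma z \<noteq> 0" "Gamma (1 - z) \<noteq> 0" "sin (of_real pi * z) \<noteq> 0"
    using z_nonpos sin_pi_times_nonzero[OF z] by (auto simp: Gamma_eq_zero_iff)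
  \<comment> \<open>\<open>g\<close> is the constant \<open>\<pi>\<close> off the integers by the reflection formula, so its derivative vanishes.\<close>
  have "(g has_field_derivative 0) (at z)"
  proof (rule has_field_derivative_transform_within_open[where f = "\<lambda>_. of_real pi" and S = "- \<int>"])
    show "of_real pi = g t" if "t \<in> - \<int>" for t
      using Gamma_reflection_complex[of t] sin_pi_times_nonzero[of t] that by (simp add: g_def)
  qed (use z in \<open>auto simp: open_Compl\<close>)
  moreover have "(g has_field_derivative Gamma z * Gamma (1 - z) *
      (sin (of_real pi * z) * (Digamma z - Digamma (1 - z)) + of_real pi * cos (of_real pi * z))) (at z)"
    unfolding g_def
    by (rule derivative_eq_intros refl has_field_derivative_Gamma z_nonpos | simp)+
      (simp add: algebra_simps)
  ultimately have "sin (of_real pi * z) * (Digamma z - Digamma (1 - z)) + of_real pi * cos (of_real pi * z) = 0"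
    using DERIV_unique nonzero by fastforce
  with nonzero(3) show ?thesis
    by (simp add: cot_def field_simps add_eq_0_iff)
qed

lemma pi_cot_sums:
  fixes z :: complex
  assumes "z \<notin> \<int>"
  shows "(\<lambda>k. inverse (z + of_nat k) - inverse (1 - z + of_nat k)) sums (of_real pi * cot (of_real pi * z))"
proof -
  have "z \<noteq> 0" "1 - z \<noteq> 0"
    using assms by auto
  from Digamma_diff_sums[OF this] show ?thesis
    unfolding pi_cot_eq_Digamma_diff[OF assms] .
qed

subsection \<open>Partial fractions of the hyperbolic secant\<close>

definition lorentzian :: "real \<Rightarrow> real \<Rightarrow> real" where
  "lorentzian a l = a / (l\<^sup>2 + a\<^sup>2)"

lemma lorentzian_nonneg: "a \<ge> 0 \<Longrightarrow> lorentzian a l \<ge> 0"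
  by (simp add: lorentzian_def)

lemma isCont_lorentzian: "a \<noteq> 0 \<Longrightarrow> isCont (lorentzian a) l"
  unfolding lorentzian_def by (intro continuous_intros) (simp add: add_nonneg_eq_0_iff)

lemma lorentzian_minus: "lorentzian (- a) l = - lorentzian a l"
  by (simp add: lorentzian_def)

lemma lorentzian_half: "lorentzian (a / 2) (l / 2) = 2 * lorentzian a l"
  by (simp add: lorentzian_def power_divide field_simps)

lemma inverse_add_inverse_conj:
  fixes a b :: real
  assumes "a \<noteq> 0"
  shows "inverse (complex_of_real a - \<i> * of_real b) + inverse (of_real a + \<i> * of_real b) =
    of_real (2 * lorentzian a b)"
proof -
  have "complex_of_real a - \<i> * of_real b \<noteq> 0" "complex_of_real a + \<i> * of_real b \<noteq> 0"
    using assms by (auto simp: complex_eq_iff)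
  moreover have "(complex_of_real a - \<i> * of_real b) * (of_real a + \<i> * of_real b) = of_real (b\<^sup>2 + a\<^sup>2)"
    by (simp add: complex_eq_iff power2_eq_square)
  ultimately show ?thesis
    unfolding lorentzian_def by (simp add: field_simps)
qed

lemma pi_cot_add_pi_cot_conj:
  fixes l :: real
  defines "z \<equiv> complex_of_real (1/4) - \<i> * of_real (l / 2)"
  shows "of_real pi * cot (of_real pi * z) + of_real pi * cot (of_real pi * (1/2 - z)) =
    of_real (2 * pi / cosh (pi * l))"
proof -
  define A where "A = of_real pi * z"
  have "of_real pi / 2 - 2 * A = \<i> * of_real (pi * l)"
    unfolding A_def z_def by (simp add: algebra_simps)
  then have "sin (2 * A) = of_real (cosh (pi * l))"
    using sin_cos_eq[of "2 * A"] cosh_real[of "pi * l"] by (simp add: cosh_def exp_minus)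
  then have sin_cos: "2 * sin A * cos A = of_real (cosh (pi * l))"
    by (simp add: sin_double)
  then have "sin A \<noteq> 0" "cos A \<noteq> 0"
    by auto
  have "cot (of_real pi * (1/2 - z)) = sin A / cos A"
    using sin_cos_eq[of A] cos_sin_eq[of A] by (simp add: A_def cot_def right_diff_distrib)
  \<comment> \<open>\<open>cot A + tan A = 2 / sin (2A)\<close>\<close>
  moreover have "cot A + sin A / cos A = 2 / of_real (cosh (pi * l))"
    using \<open>sin A \<noteq> 0\<close> \<open>cos A \<noteq> 0\<close> sin_cos sin_cos_squared_add[of A]
    by (simp add: cot_def field_simps power2_eq_square flip: sin_cos)
  ultimately have "of_real pi * cot A + of_real pi * cot (of_real pi * (1/2 - z)) =
      of_real pi * (2 / of_real (cosh (pi * l)))"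
    by (metis distrib_left)
  then show ?thesis
    unfolding A_def by simp
qed

definition sech_term :: "nat \<Rightarrow> real \<Rightarrow> real" where
  "sech_term k l = lorentzian (2 * real k + 1/2) l - lorentzian (2 * real k + 3/2) l"

lemma pi_cot_terms_conj:
  fixes l :: real
  defines "z \<equiv> complex_of_real (1/4) - \<i> * of_real (l / 2)"
  shows "(inverse (z + of_nat k) - inverse (1 - z + of_nat k)) +
      (inverse (1/2 - z + of_nat k) - inverse (1 - (1/2 - z) + of_nat k)) =
    of_real (4 * sech_term k l)"
proof -
  define c d where "c = real k + 1/4" and "d = real k + 3/4"
  have shifts: "z + of_nat k = of_real c - \<i> * of_real (l / 2)"
    "1/2 - z + of_nat k = of_real c + \<i> * of_real (l / 2)"
    "1 - (1/2 - z) + of_nat k = of_real d - \<i> * of_real (l / 2)"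
    "1 - z + of_nat k = of_real d + \<i> * of_real (l / 2)"
    unfolding z_def c_def d_def by (simp_all add: complex_eq_iff)
  have "c = (2 * real k + 1/2) / 2" "d = (2 * real k + 3/2) / 2"
    unfolding c_def d_def by simp_all
  note halves = lorentzian_half[of "2 * real k + 1/2" l, folded this(1)]
    lorentzian_half[of "2 * real k + 3/2" l, folded this(2)]
  have "c \<noteq> 0" "d \<noteq> 0"
    unfolding c_def d_def by simp_all
  have "(inverse (z + of_nat k) - inverse (1 - z + of_nat k)) +
      (inverse (1/2 - z + of_nat k) - inverse (1 - (1/2 - z) + of_nat k)) =
    (inverse (z + of_nat k) + inverse (1/2 - z + of_nat k)) -
      (inverse (1 - (1/2 - z) + of_nat k) + inverse (1 - z + of_nat k))"
    by (simp add: algebra_simps)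
  also have "\<dots> = of_real (2 * lorentzian c (l / 2)) - of_real (2 * lorentzian d (l / 2))"
    unfolding shifts inverse_add_inverse_conj[OF \<open>c \<noteq> 0\<close>] inverse_add_inverse_conj[OF \<open>d \<noteq> 0\<close>] ..
  also have "\<dots> = of_real (4 * sech_term k l)"
    unfolding halves sech_term_def by simp
  finally show ?thesis .
qed

lemma not_Ints_quarter:
  fixes z :: complex
  assumes "Re z = 1/4"
  shows "z \<notin> \<int>"
proof
  assume "z \<in> \<int>"
  then obtain n :: int where "real_of_int n = 1/4"
    using assms by (auto elim!: Ints_cases)
  then have "4 * n = 1"
    by linarith
  then show False
    by presburger
qed

lemma sech_term_sums: "(\<lambda>k. sech_term k l) sums (pi / (2 * cosh (pi * l)))"
proof -
  define z where "z = complex_of_real (1/4) - \<i> * of_real (l / 2)"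
  have "z \<notin> \<int>" "1/2 - z \<notin> \<int>"
    by (auto intro!: not_Ints_quarter simp: z_def)
  then have "(\<lambda>k. (inverse (z + of_nat k) - inverse (1 - z + of_nat k)) +
      (inverse (1/2 - z + of_nat k) - inverse (1 - (1/2 - z) + of_nat k)))
    sums (of_real pi * cot (of_real pi * z) + of_real pi * cot (of_real pi * (1/2 - z)))"
    by (intro sums_add pi_cot_sums)
  then have "(\<lambda>k. complex_of_real (4 * sech_term k l)) sums of_real (2 * pi / cosh (pi * l))"
    unfolding z_def pi_cot_terms_conj pi_cot_add_pi_cot_conj .
  then have "(\<lambda>k. 4 * sech_term k l) sums (2 * pi / cosh (pi * l))"
    by (simp only: sums_of_real_iff)
  from sums_divide[OF this, of 4] show ?thesis
    by simp
qed

lemma abs_sech_term_le: "\<bar>sech_term k l\<bar> \<le> 4 / (real k + 1)\<^sup>2"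
proof -
  define b where "b = 2 * real k + 1/2"
  have "b > 0"
    unfolding b_def by simp
  then have pos: "l\<^sup>2 + b\<^sup>2 > 0" "l\<^sup>2 + (b + 1)\<^sup>2 > 0"
    by (auto intro: add_nonneg_pos)
  have "sech_term k l = (b * (b + 1) - l\<^sup>2) / ((l\<^sup>2 + b\<^sup>2) * (l\<^sup>2 + (b + 1)\<^sup>2))"
    using pos unfolding sech_term_def lorentzian_def b_def[symmetric]
    by (simp add: b_def field_simps power2_eq_square)
  also have "\<bar>\<dots>\<bar> \<le> (l\<^sup>2 + (b + 1)\<^sup>2) / ((l\<^sup>2 + b\<^sup>2) * (l\<^sup>2 + (b + 1)\<^sup>2))"
    using \<open>b > 0\<close> unfolding abs_divide abs_of_pos[OF mult_pos_pos[OF pos]]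
    by (intro divide_right_mono less_imp_le[OF mult_pos_pos[OF pos]])
      (auto simp: abs_le_iff power2_eq_square algebra_simps)
  also have "\<dots> = 1 / (l\<^sup>2 + b\<^sup>2)"
    using pos(2) \<open>b > 0\<close> by simp
  also have "\<dots> \<le> 1 / b\<^sup>2"
    using \<open>b > 0\<close> pos(1) by (intro divide_left_mono) auto
  also have "\<dots> \<le> 4 / (real k + 1)\<^sup>2"
  proof -
    have "(real k + 1)\<^sup>2 \<le> 4 * b\<^sup>2"
      unfolding b_def by (simp add: power2_eq_square algebra_simps)
    with \<open>b > 0\<close> show ?thesis
      by (simp add: field_simps)
  qed
  finally show ?thesis .
qed

subsection \<open>Integrals of Lorentzians over the real line\<close>

lemma lborel_integral_FTC_nonneg:
  fixes f F :: "real \<Rightarrow> real"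
  assumes "\<And>x. DERIV F x :> f x" and "\<And>x. isCont f x" and "\<And>x. 0 \<le> f x"
    and "(F \<longlongrightarrow> A) at_bot" and "(F \<longlongrightarrow> B) at_top"
  shows "integrable lborel f" and "integral\<^sup>L lborel f = B - A"
proof -
  have UNIV_eq: "einterval (-\<infinity>) \<infinity> = (UNIV :: real set)"
    by (auto simp: einterval_def)
  have "set_integrable lborel (einterval (-\<infinity>) \<infinity>) f" "(LBINT x=-\<infinity>..\<infinity>. f x) = B - A"
    by (rule interval_integral_FTC_nonneg[where F = F and A = A and B = B];
        simp add: assms ereal_tendsto_simps)+
  then show "integrable lborel f" "integral\<^sup>L lborel f = B - A"
    by (simp_all add: UNIV_eq set_integrable_def interval_lebesgue_integral_def set_lebesgue_integral_def)
qed

lemma tendsto_arctan_divide_at_bot: "(c::real) > 0 \<Longrightarrow> ((\<lambda>l. arctan (l / c)) \<longlongrightarrow> - (pi / 2)) at_bot"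
  by (intro filterlim_compose[OF tendsto_arctan_at_bot]) real_asymp

lemma tendsto_arctan_divide_at_top: "(c::real) > 0 \<Longrightarrow> ((\<lambda>l. arctan (l / c)) \<longlongrightarrow> pi / 2) at_top"
  by (intro filterlim_compose[OF tendsto_arctan_at_top]) real_asymp

lemma has_real_derivative_arctan_divide:
  "a \<noteq> 0 \<Longrightarrow> DERIV (\<lambda>l. arctan (l / a)) l :> lorentzian a l"
  by (auto intro!: derivative_eq_intros simp: lorentzian_def field_simps power2_eq_square)

lemma
  fixes a :: real
  assumes "a > 0"
  shows integrable_lorentzian: "integrable lborel (lorentzian a)"
    and integral_lorentzian: "integral\<^sup>L lborel (lorentzian a) = pi"
proof -
  have "((\<lambda>l. arctan (l / a)) \<longlongrightarrow> - (pi / 2)) at_bot" "((\<lambda>l. arctan (l / a)) \<longlongrightarrow> pi / 2) at_top"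
    using assms tendsto_arctan_divide_at_bot tendsto_arctan_divide_at_top by simp_all
  moreover note isCont_lorentzian lorentzian_nonneg
  ultimately show "integrable lborel (lorentzian a)" "integral\<^sup>L lborel (lorentzian a) = pi"
    using assms lborel_integral_FTC_nonneg[OF has_real_derivative_arctan_divide] by auto
qed

lemma DERIV_primitive_lorentzian_square:
  assumes "a > 0"
  shows "DERIV (\<lambda>l. (arctan (l / a) + a * l / (l\<^sup>2 + a\<^sup>2)) / (2 * a)) l :> lorentzian a l * lorentzian a l"
proof -
  have q: "l\<^sup>2 + a\<^sup>2 > 0"
    using assms by (simp add: add_nonneg_pos)
  have "DERIV (\<lambda>l. a * l / (l\<^sup>2 + a\<^sup>2)) l :> a * (a\<^sup>2 - l\<^sup>2) / (l\<^sup>2 + a\<^sup>2)\<^sup>2"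
    using q by (auto intro!: derivative_eq_intros simp: field_simps power2_eq_square)
  then have d: "DERIV (\<lambda>l. arctan (l / a) + a * l / (l\<^sup>2 + a\<^sup>2)) l :> lorentzian a l + a * (a\<^sup>2 - l\<^sup>2) / (l\<^sup>2 + a\<^sup>2)\<^sup>2"
    using assms by (intro DERIV_add has_real_derivative_arctan_divide) auto
  have e: "lorentzian a l + a * (a\<^sup>2 - l\<^sup>2) / (l\<^sup>2 + a\<^sup>2)\<^sup>2 = 2 * a * (lorentzian a l * lorentzian a l)"
    using q unfolding lorentzian_def by (simp add: divide_simps) (simp add: power2_eq_square algebra_simps)
  show ?thesis
    using DERIV_cdivide[OF d, of "2 * a"] assms unfolding e by simp
qed

lemma DERIV_primitive_lorentzian_mult:
  assumes "a > 0" and "b > 0" and "b\<^sup>2 - a\<^sup>2 \<noteq> 0"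
  shows "DERIV (\<lambda>l. (b * arctan (l / a) - a * arctan (l / b)) / (b\<^sup>2 - a\<^sup>2)) l :> lorentzian a l * lorentzian b l"
proof -
  have q: "l\<^sup>2 + a\<^sup>2 > 0" "l\<^sup>2 + b\<^sup>2 > 0"
    using assms by (simp_all add: add_nonneg_pos)
  have d: "DERIV (\<lambda>l. b * arctan (l / a) - a * arctan (l / b)) l :> b * lorentzian a l - a * lorentzian b l"
    using assms by (intro DERIV_diff DERIV_cmult has_real_derivative_arctan_divide) auto
  have e: "b * lorentzian a l - a * lorentzian b l = (b\<^sup>2 - a\<^sup>2) * (lorentzian a l * lorentzian b l)"
    using q unfolding lorentzian_def by (simp add: divide_simps) (simp add: power2_eq_square algebra_simps)
  show ?thesis
    using DERIV_cdivide[OF d, of "b\<^sup>2 - a\<^sup>2"] assms unfolding e by simp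
qed

lemma lorentzian_mult_antiderivative:
  fixes a b :: real
  assumes "a > 0" and "b > 0"
  obtains F where "\<And>l. DERIV F l :> lorentzian a l * lorentzian b l"
    and "(F \<longlongrightarrow> - (pi / (2 * (a + b)))) at_bot" and "(F \<longlongrightarrow> pi / (2 * (a + b))) at_top"
proof (cases "a = b")
  case True
  let ?F = "\<lambda>l. (arctan (l / a) + a * l / (l\<^sup>2 + a\<^sup>2)) / (2 * a)"
  have "(?F \<longlongrightarrow> (- (pi / 2) + 0) / (2 * a)) at_bot"
    using assms by (intro tendsto_intros tendsto_arctan_divide_at_bot; (real_asymp | simp))
  moreover have "(?F \<longlongrightarrow> (pi / 2 + 0) / (2 * a)) at_top"
    using assms by (intro tendsto_intros tendsto_arctan_divide_at_top; (real_asymp | simp))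
  ultimately show ?thesis
    using that[of ?F] True DERIV_primitive_lorentzian_square[OF assms(1)] by simp
next
  case False
  let ?F = "\<lambda>l. (b * arctan (l / a) - a * arctan (l / b)) / (b\<^sup>2 - a\<^sup>2)"
  have "b\<^sup>2 - a\<^sup>2 \<noteq> 0"
    using \<open>a \<noteq> b\<close> assms by (simp add: power2_eq_iff_nonneg)
  have "(?F \<longlongrightarrow> (b * - (pi / 2) - a * - (pi / 2)) / (b\<^sup>2 - a\<^sup>2)) at_bot"
    using assms \<open>b\<^sup>2 - a\<^sup>2 \<noteq> 0\<close> by (intro tendsto_intros tendsto_arctan_divide_at_bot)
  also have "(b * - (pi / 2) - a * - (pi / 2)) / (b\<^sup>2 - a\<^sup>2) = - (pi / (2 * (a + b)))"
    using \<open>b\<^sup>2 - a\<^sup>2 \<noteq> 0\<close> assms by (simp add: field_simps power2_eq_square)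
  finally have bot: "(?F \<longlongrightarrow> - (pi / (2 * (a + b)))) at_bot" .
  have "(?F \<longlongrightarrow> (b * (pi / 2) - a * (pi / 2)) / (b\<^sup>2 - a\<^sup>2)) at_top"
    using assms \<open>b\<^sup>2 - a\<^sup>2 \<noteq> 0\<close> by (intro tendsto_intros tendsto_arctan_divide_at_top)
  also have "(b * (pi / 2) - a * (pi / 2)) / (b\<^sup>2 - a\<^sup>2) = pi / (2 * (a + b))"
    using \<open>b\<^sup>2 - a\<^sup>2 \<noteq> 0\<close> assms by (simp add: field_simps power2_eq_square)
  finally have top: "(?F \<longlongrightarrow> pi / (2 * (a + b))) at_top" .
  show ?thesis
    using that[OF DERIV_primitive_lorentzian_mult[OF assms \<open>b\<^sup>2 - a\<^sup>2 \<noteq> 0\<close>] bot top] .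
qed

lemma
  fixes a b :: real
  assumes "a > 0" and "b > 0"
  shows integrable_lorentzian_mult: "integrable lborel (\<lambda>l. lorentzian a l * lorentzian b l)"
    and integral_lorentzian_mult: "(\<integral>l. lorentzian a l * lorentzian b l \<partial>lborel) = pi / (a + b)"
proof -
  obtain F where "\<And>l. DERIV F l :> lorentzian a l * lorentzian b l"
    and "(F \<longlongrightarrow> - (pi / (2 * (a + b)))) at_bot" and "(F \<longlongrightarrow> pi / (2 * (a + b))) at_top"
    using lorentzian_mult_antiderivative[OF assms] by blast
  moreover have "isCont (\<lambda>l. lorentzian a l * lorentzian b l) l" for l
    using assms by (intro continuous_intros isCont_lorentzian) auto
  moreover have "0 \<le> lorentzian a l * lorentzian b l" for l
    using assms by (simp add: lorentzian_nonneg)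
  ultimately show "integrable lborel (\<lambda>l. lorentzian a l * lorentzian b l)"
    and "(\<integral>l. lorentzian a l * lorentzian b l \<partial>lborel) = pi / (a + b)"
    using lborel_integral_FTC_nonneg[of F] by (auto simp: divide_simps)
qed

subsection \<open>The integral against \<open>\<sigma>\<^sup>(\<^sup>0\<^sup>)\<close>\<close>

lemma string_f_eq_lorentzian: "string_f x l = 2 * lorentzian x l"
  by (simp add: string_f_def lorentzian_def)

lemma sigma0_sums: "(\<lambda>k. sech_term k l / pi) sums sigma0 l"
  using sums_divide[OF sech_term_sums[of l], of pi] by (simp add: sigma0_def)

lemma abs_sigma0_le: "\<bar>sigma0 l\<bar> \<le> 1"
  using cosh_real_ge_1[of "pi * l"] by (simp add: sigma0_def)

lemma continuous_on_sigma0: "continuous_on UNIV sigma0"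
  unfolding sigma0_def by (intro continuous_intros) simp

lemma integrable_sigma0_lorentzian: "integrable lborel (\<lambda>l. sigma0 l * lorentzian a l)"
proof -
  have pos: "integrable lborel (\<lambda>l. sigma0 l * lorentzian a l)" if "a > 0" for a
  proof (rule Bochner_Integration.integrable_bound[OF integrable_lorentzian[OF that]])
    have "continuous_on UNIV (\<lambda>l. sigma0 l * lorentzian a l)"
      using that by (intro continuous_on_mult continuous_on_sigma0 continuous_at_imp_continuous_on
          ballI isCont_lorentzian) simp
    then show "(\<lambda>l. sigma0 l * lorentzian a l) \<in> borel_measurable lborel"
      by (simp add: borel_measurable_continuous_onI)
    show "AE l in lborel. norm (sigma0 l * lorentzian a l) \<le> norm (lorentzian a l)"
      using abs_sigma0_le by (intro AE_I2) (simp add: abs_mult mult_left_le_one_le)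
  qed
  consider "a > 0" | "a = 0" | "a < 0"
    by linarith
  then show ?thesis
  proof cases
    case 3
    then have "integrable lborel (\<lambda>l. - (sigma0 l * lorentzian (- a) l))"
      using pos by (intro integrable_minus) simp
    then show ?thesis
      by (simp add: lorentzian_minus)
  qed (use pos in \<open>auto simp: lorentzian_def\<close>)
qed

lemma integral_sech_term_lorentzian:
  assumes "x > 0"
  shows "integrable lborel (\<lambda>l. sech_term k l * lorentzian x l)"
    and "(\<integral>l. sech_term k l * lorentzian x l \<partial>lborel) =
      pi / (x + (2 * real k + 1/2)) - pi / (x + (2 * real k + 3/2))"
proof -
  have "sech_term k l * lorentzian x l =
      lorentzian x l * lorentzian (2 * real k + 1/2) l - lorentzian x l * lorentzian (2 * real k + 3/2) l" for l
    by (simp add: sech_term_def algebra_simps)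
  moreover note integrable_lorentzian_mult[OF assms, of "2 * real k + 1/2"]
    integrable_lorentzian_mult[OF assms, of "2 * real k + 3/2"]
    integral_lorentzian_mult[OF assms, of "2 * real k + 1/2"]
    integral_lorentzian_mult[OF assms, of "2 * real k + 3/2"]
  ultimately show "integrable lborel (\<lambda>l. sech_term k l * lorentzian x l)"
    and "(\<integral>l. sech_term k l * lorentzian x l \<partial>lborel) =
      pi / (x + (2 * real k + 1/2)) - pi / (x + (2 * real k + 3/2))"
    by simp_all
qed

lemma integral_suminf_sech_term_lorentzian:
  assumes "x > 0"
  shows "(\<integral>l. (\<Sum>k. sech_term k l * lorentzian x l) \<partial>lborel) =
    (\<Sum>k. \<integral>l. sech_term k l * lorentzian x l \<partial>lborel)"
proof (rule integral_suminf)
  have inverse_squares: "summable (\<lambda>k. 1 / (real k + 1)\<^sup>2)"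
    using inverse_squares_sums by (simp add: sums_iff add.commute)
  have summable: "summable (\<lambda>k. 4 / (real k + 1)\<^sup>2 * c)" for c :: real
    using summable_mult2[OF inverse_squares, of "4 * c"] by simp
  have bound: "norm (sech_term k l * lorentzian x l) \<le> 4 / (real k + 1)\<^sup>2 * lorentzian x l" for k l
    using mult_right_mono[OF abs_sech_term_le lorentzian_nonneg[of x l]] assms
    by (simp add: abs_mult lorentzian_nonneg)
  show "integrable lborel (\<lambda>l. sech_term k l * lorentzian x l)" for k
    using integral_sech_term_lorentzian(1)[OF assms] .
  show "AE l in lborel. summable (\<lambda>k. norm (sech_term k l * lorentzian x l))"
    using bound by (intro AE_I2 summable_comparison_test'[OF summable]) auto
  have "(\<integral>l. norm (sech_term k l * lorentzian x l) \<partial>lborel) \<le> 4 / (real k + 1)\<^sup>2 * pi" for k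
  proof -
    have "(\<integral>l. norm (sech_term k l * lorentzian x l) \<partial>lborel) \<le>
        (\<integral>l. 4 / (real k + 1)\<^sup>2 * lorentzian x l \<partial>lborel)"
      using integral_sech_term_lorentzian(1)[OF assms] integrable_lorentzian[OF assms]
      by (intro integral_mono integrable_norm integrable_mult_right bound)
    then show ?thesis
      using integral_lorentzian[OF assms] by simp
  qed
  then show "summable (\<lambda>k. \<integral>l. norm (sech_term k l * lorentzian x l) \<partial>lborel)"
    by (intro summable_comparison_test'[OF summable]) auto
qed

lemma integral_sigma0_lorentzian:
  assumes "x > 0"
  shows "(\<integral>l. sigma0 l * lorentzian x l \<partial>lborel) =
    (Digamma ((x + 3/2) / 2) - Digamma ((x + 1/2) / 2)) / 2"
proof -
  have Digamma_sums: "(\<lambda>k. pi / 2 * (inverse ((x + 1/2) / 2 + real k) - inverse ((x + 3/2) / 2 + real k)))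
      sums (pi / 2 * (Digamma ((x + 3/2) / 2) - Digamma ((x + 1/2) / 2)))"
    using assms by (intro sums_mult Digamma_diff_sums) auto
  have terms: "pi / 2 * (inverse ((x + 1/2) / 2 + real k) - inverse ((x + 3/2) / 2 + real k)) =
      pi / (x + (2 * real k + 1/2)) - pi / (x + (2 * real k + 3/2))" for k
    using assms by (simp add: divide_simps) (simp add: algebra_simps)
  have sums: "(\<lambda>k. \<integral>l. sech_term k l * lorentzian x l \<partial>lborel)
      sums (pi / 2 * (Digamma ((x + 3/2) / 2) - Digamma ((x + 1/2) / 2)))"
    using Digamma_sums unfolding terms integral_sech_term_lorentzian(2)[OF assms] .
  have "(\<lambda>k. sech_term k l * lorentzian x l) sums (pi * (sigma0 l * lorentzian x l))" for l
    using sums_mult[OF sums_mult2[OF sigma0_sums[of l]], of pi "lorentzian x l"] by simp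
  then have "sigma0 l * lorentzian x l = (\<Sum>k. sech_term k l * lorentzian x l) / pi" for l
    by (simp add: sums_iff)
  then have "(\<integral>l. sigma0 l * lorentzian x l \<partial>lborel) =
      (\<Sum>k. \<integral>l. sech_term k l * lorentzian x l \<partial>lborel) / pi"
    by (simp add: integral_suminf_sech_term_lorentzian[OF assms])
  also have "\<dots> = pi / 2 * (Digamma ((x + 3/2) / 2) - Digamma ((x + 1/2) / 2)) / pi"
    unfolding sums_unique[OF sums] ..
  finally show ?thesis
    by simp
qed

lemma sigma0_string_f: "sigma0 l * string_f x l = 2 * (sigma0 l * lorentzian x l)"
  by (simp add: string_f_eq_lorentzian)

lemma integrable_sigma0_string_f: "integrable lborel (\<lambda>l. sigma0 l * string_f x l)"
  unfolding sigma0_string_f by (intro integrable_mult_right integrable_sigma0_lorentzian)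

lemma integral_sigma0_string_f:
  fixes x :: real
  assumes "2 * x \<in> \<int>"
  shows "(\<integral>l. sigma0 l * string_f x l \<partial>lborel) =
    Digamma ((\<bar>x + 1/2\<bar> + 1) / 2) - Digamma ((\<bar>x - 1/2\<bar> + 1) / 2)"
proof -
  have string_f_integral: "(\<integral>l. sigma0 l * string_f x l \<partial>lborel) = 2 * (\<integral>l. sigma0 l * lorentzian x l \<partial>lborel)"
    unfolding sigma0_string_f by simp
  from assms obtain j :: int where "2 * x = of_int j"
    by (auto elim: Ints_cases)
  then consider "x \<ge> 1/2" | "x \<le> -1/2" | "x = 0"
    by (cases j "0::int" rule: linorder_cases) linarith+
  then show ?thesis
  proof cases
    case 1
    then show ?thesis
      unfolding string_f_integral by (simp add: integral_sigma0_lorentzian add.commute)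
  next
    case 2
    then have "(\<integral>l. sigma0 l * lorentzian x l \<partial>lborel) = - (\<integral>l. sigma0 l * lorentzian (- x) l \<partial>lborel)"
      by (simp add: lorentzian_minus)
    moreover have "\<bar>x + 1/2\<bar> = - x - 1/2" "\<bar>x - 1/2\<bar> = - x + 1/2"
      using 2 by simp_all
    ultimately show ?thesis
      using 2 unfolding string_f_integral by (simp add: integral_sigma0_lorentzian field_simps)
  next
    case 3
    then show ?thesis
      by (simp add: string_f_def)
  qed
qed

lemma integral_sigma0_Psi:
  assumes "half_pos_int s'" and "half_pos_int s"
  shows "(\<integral>l. sigma0 l * Psi s' (2 * s) l \<partial>lborel) =
    Digamma ((s' + s + 1) / 2) - Digamma ((\<bar>s' - s\<bar> + 1) / 2)"
proof -
  obtain n m :: nat where n: "s' = real n / 2" and m: "s = real m / 2"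
    using assms by (auto simp: half_pos_int_def)
  define x0 where "x0 = s - s' + 1/2"
  define D where "D y = Digamma ((\<bar>y - 1/2\<bar> + 1) / 2)" for y :: real
  have "Psi s' (2 * s) l = (\<Sum>k<n. string_f (x0 + real k) l)" for l
    unfolding Psi_def x0_def n by (simp add: algebra_simps)
  then have "(\<integral>l. sigma0 l * Psi s' (2 * s) l \<partial>lborel) =
      (\<Sum>k<n. \<integral>l. sigma0 l * string_f (x0 + real k) l \<partial>lborel)"
    using integrable_sigma0_string_f by (simp add: sum_distrib_left)
  also have "\<dots> = (\<Sum>k<n. D (x0 + real (Suc k)) - D (x0 + real k))"
  proof (rule sum.cong[OF refl])
    fix k
    have "2 * (x0 + real k) = of_int (int m - int n + 1 + 2 * int k)"
      unfolding x0_def n m by simp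
    then have "2 * (x0 + real k) \<in> \<int>"
      by (metis Ints_of_int)
    then show "(\<integral>l. sigma0 l * string_f (x0 + real k) l \<partial>lborel) = D (x0 + real (Suc k)) - D (x0 + real k)"
      by (simp add: integral_sigma0_string_f D_def algebra_simps)
  qed
  also have "\<dots> = D (x0 + real n) - D x0"
    by (subst sum_lessThan_telescope) simp
  also have "\<dots> = Digamma ((s' + s + 1) / 2) - Digamma ((\<bar>s' - s\<bar> + 1) / 2)"
    unfolding D_def x0_def n m by (simp add: abs_minus_commute)
  finally show ?thesis .
qed

theorem theorem5p1:
  fixes S :: "real set" and \<rho> :: "real \<Rightarrow> real" and s :: real
  assumes "finite S" and "S \<noteq> {}"
    and "\<forall>x\<in>S. half_pos_int x"
    and "\<forall>x\<in>S. \<rho> x > 0"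
    and "(\<Sum>x\<in>S. \<rho> x) = 1"
    and "s \<in> S"
  shows "vacuum_energy S \<rho> s =
    - (\<Sum>s'\<in>S. \<rho> s' * (Digamma ((s' + s + 1) / 2) - Digamma ((\<bar>s' - s\<bar> + 1) / 2)))"
  \<comment> \<open>The identity holds term by term in \<open>s'\<close>.\<close>
  using assms(3,6) by (simp add: vacuum_energy_def integral_sigma0_Psi)

end
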